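(* The nilpotent Lie algebra $\mathfrak{h}_5\oplus\mathbb{R}^3$ admits weak HKT structures and does not admit any SKT structure. The Lie algebras $\mathfrak{h}_3^{\mathbb{C}}\oplus\mathbb{R}^2$ and $\mathfrak{h}_7^Q\oplus\mathbb{R}$ admit SKT structures and weak HKT structures.
   Context: $\mathfrak{h}_5$ is the $5$-dimensional Heisenberg Lie algebra (basis $e_1,\dots,e_5$ with dual basis satisfying $de^i=0$ for $i\le4$, $de^5=e^{12}+e^{34}$); $\mathfrak{h}_3^{\mathbb{C}}$ is the complex $3$-dimensional Heisenberg Lie algebra regarded as a real $6$-dimensional Lie algebra; $\mathfrak{h}_7^Q$ is the $7$-dimensional quaternionic Heisenberg Lie algebra (with $3$-dimensional center), given by $de^i=0$ for $i\le4$, $de^5=e^{12}+e^{34}$, $de^6=e^{13}-e^{24}$, $de^7=e^{14}+e^{23}$. An SKT structure on a Lie algebra is a complex structure $J$ together with a $J$-compatible inner product $g$ whose fundamental form $\omega=g(J\cdot,\cdot)$ satisfies $\partial\bar\partial\omega=0$. An HKT structure is a hypercomplex structure $(J_1,J_2,J_3)$ (complex structures with $J_1J_2=-J_2J_1=J_3$) with an inner product $g$ compatible with each $J_l$ such that $J_1d\omega_1=J_2d\omega_2=J_3d\omega_3$, where $\omega_l=g(J_l\cdot,\cdot)$; it is weak if the torsion $3$-form of the common Bismut connection is not closed. *)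

theory Defs
  imports Complex_Main
begin

text \<open>
Concrete real Lie algebras of dimension n with basis e_1,...,e_n (indices 1..n).
Vectors are coordinate functions nat => 'a (real vectors, or complexified
vectors when 'a = complex) vanishing outside {1..n}.  A Lie algebra is given,
as in the paper, by the differentials of the dual 1-forms:
de k i j = (d e^k)(e_i, e_j), antisymmetric in i j.  With the Chevalley-Eilenberg
convention (d alpha)(x,y) = - alpha([x,y]) the bracket is
[e_i, e_j] = - sum_k de k i j e_k.
\<close>

definition inV :: "nat \<Rightarrow> (nat \<Rightarrow> 'a::zero) \<Rightarrow> bool" where
  "inV n x \<longleftrightarrow> (\<forall>i. i \<notin> {1..n} \<longrightarrow> x i = 0)"

definition matv :: "nat \<Rightarrow> (nat \<Rightarrow> nat \<Rightarrow> real) \<Rightarrow> (nat \<Rightarrow> 'a::real_field) \<Rightarrow> nat \<Rightarrow> 'a" where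
  "matv n A x = (\<lambda>i. if i \<in> {1..n} then (\<Sum>j=1..n. of_real (A i j) * x j) else 0)"

definition lbr :: "nat \<Rightarrow> (nat \<Rightarrow> nat \<Rightarrow> nat \<Rightarrow> real) \<Rightarrow> (nat \<Rightarrow> 'a::real_field) \<Rightarrow> (nat \<Rightarrow> 'a) \<Rightarrow> nat \<Rightarrow> 'a" where
  "lbr n de x y = (\<lambda>k. if k \<in> {1..n}
      then - (\<Sum>i=1..n. \<Sum>j=1..n. of_real (de k i j) * x i * y j) else 0)"

definition bil :: "nat \<Rightarrow> (nat \<Rightarrow> nat \<Rightarrow> real) \<Rightarrow> (nat \<Rightarrow> 'a::real_field) \<Rightarrow> (nat \<Rightarrow> 'a) \<Rightarrow> 'a" where
  "bil n g x y = (\<Sum>i=1..n. \<Sum>j=1..n. of_real (g i j) * x i * y j)"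

definition wedge2 :: "nat \<Rightarrow> nat \<Rightarrow> nat \<Rightarrow> nat \<Rightarrow> real" where
  "wedge2 a b i j = (if i = a \<and> j = b then 1 else if i = b \<and> j = a then -1 else 0)"

text \<open>Forms: a k-form is a function on lists of k vectors (multilinear, alternating).\<close>
type_synonym 'a form = "(nat \<Rightarrow> 'a) list \<Rightarrow> 'a"

definition drop2 :: "nat \<Rightarrow> nat \<Rightarrow> 'b list \<Rightarrow> 'b list" where
  "drop2 i j xs = map (\<lambda>l. xs ! l) (filter (\<lambda>l. l \<noteq> i \<and> l \<noteq> j) [0..<length xs])"

definition dform :: "nat \<Rightarrow> (nat \<Rightarrow> nat \<Rightarrow> nat \<Rightarrow> real) \<Rightarrow> 'a::real_field form \<Rightarrow> 'a form" where
  "dform n de \<alpha> xs = (\<Sum>i<length xs. \<Sum>j<length xs.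
      if i < j then (-1) ^ (i + j) * \<alpha> (lbr n de (xs ! i) (xs ! j) # drop2 i j xs) else 0)"

definition Jform :: "nat \<Rightarrow> (nat \<Rightarrow> nat \<Rightarrow> real) \<Rightarrow> 'a::real_field form \<Rightarrow> 'a form" where
  "Jform n J \<alpha> xs = \<alpha> (map (matv n J) xs)"

definition omega :: "nat \<Rightarrow> (nat \<Rightarrow> nat \<Rightarrow> real) \<Rightarrow> (nat \<Rightarrow> nat \<Rightarrow> real) \<Rightarrow> 'a::real_field form" where
  "omega n g J xs = bil n g (matv n J (xs ! 0)) (xs ! 1)"

definition cplx_str :: "nat \<Rightarrow> (nat \<Rightarrow> nat \<Rightarrow> nat \<Rightarrow> real) \<Rightarrow> (nat \<Rightarrow> nat \<Rightarrow> real) \<Rightarrow> bool" where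
  "cplx_str n de J \<longleftrightarrow>
     (\<forall>x :: nat \<Rightarrow> real. inV n x \<longrightarrow> matv n J (matv n J x) = (\<lambda>i. - x i)) \<and>
     (\<forall>x y :: nat \<Rightarrow> real. inV n x \<and> inV n y \<longrightarrow>
        lbr n de (matv n J x) (matv n J y) - matv n J (lbr n de (matv n J x) y)
        - matv n J (lbr n de x (matv n J y)) - lbr n de x y = (\<lambda>_. 0))"

definition compat_metric :: "nat \<Rightarrow> (nat \<Rightarrow> nat \<Rightarrow> real) \<Rightarrow> (nat \<Rightarrow> nat \<Rightarrow> real) \<Rightarrow> bool" where
  "compat_metric n J g \<longleftrightarrow>
     (\<forall>i\<in>{1..n}. \<forall>j\<in>{1..n}. g i j = g j i) \<and>
     (\<forall>x :: nat \<Rightarrow> real. inV n x \<and> x \<noteq> (\<lambda>_. 0) \<longrightarrow> bil n g x x > 0) \<and>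
     (\<forall>x y :: nat \<Rightarrow> real. inV n x \<and> inV n y \<longrightarrow>
        bil n g (matv n J x) (matv n J y) = bil n g x y)"

text \<open>The (r, k-r)-component of a complex k-form is
 obtained by splitting each argument v = P v + Q v and keeping the terms with
 exactly r arguments of type (1,0).\<close>
definition P10 :: "nat \<Rightarrow> (nat \<Rightarrow> nat \<Rightarrow> real) \<Rightarrow> (nat \<Rightarrow> complex) \<Rightarrow> nat \<Rightarrow> complex" where
  "P10 n J v = (\<lambda>i. (v i - \<i> * matv n J v i) / 2)"

definition P01 :: "nat \<Rightarrow> (nat \<Rightarrow> nat \<Rightarrow> real) \<Rightarrow> (nat \<Rightarrow> complex) \<Rightarrow> nat \<Rightarrow> complex" where
  "P01 n J v = (\<lambda>i. (v i + \<i> * matv n J v i) / 2)"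

definition typeproj :: "nat \<Rightarrow> (nat \<Rightarrow> nat \<Rightarrow> real) \<Rightarrow> nat \<Rightarrow> complex form \<Rightarrow> complex form" where
  "typeproj n J r \<alpha> xs =
     (\<Sum>S | S \<subseteq> {..<length xs} \<and> card S = r.
        \<alpha> (map (\<lambda>l. if l \<in> S then P10 n J (xs ! l) else P01 n J (xs ! l)) [0..<length xs]))"

text \<open>For the (1,1)-form omega: dbar omega = pi^{1,2}(d omega) and
 del dbar omega = pi^{2,2}(d (dbar omega)).\<close>
definition dbar_omega :: "nat \<Rightarrow> (nat \<Rightarrow> nat \<Rightarrow> nat \<Rightarrow> real) \<Rightarrow> (nat \<Rightarrow> nat \<Rightarrow> real) \<Rightarrow> (nat \<Rightarrow> nat \<Rightarrow> real) \<Rightarrow> complex form" where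
  "dbar_omega n de J g = typeproj n J 1 (dform n de (omega n g J))"

definition ddbar_omega :: "nat \<Rightarrow> (nat \<Rightarrow> nat \<Rightarrow> nat \<Rightarrow> real) \<Rightarrow> (nat \<Rightarrow> nat \<Rightarrow> real) \<Rightarrow> (nat \<Rightarrow> nat \<Rightarrow> real) \<Rightarrow> complex form" where
  "ddbar_omega n de J g = typeproj n J 2 (dform n de (dbar_omega n de J g))"

definition SKT :: "nat \<Rightarrow> (nat \<Rightarrow> nat \<Rightarrow> nat \<Rightarrow> real) \<Rightarrow> (nat \<Rightarrow> nat \<Rightarrow> real) \<Rightarrow> (nat \<Rightarrow> nat \<Rightarrow> real) \<Rightarrow> bool" where
  "SKT n de J g \<longleftrightarrow> cplx_str n de J \<and> compat_metric n J g \<and>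
     (\<forall>xs. length xs = 4 \<and> (\<forall>x\<in>set xs. inV n x) \<longrightarrow> ddbar_omega n de J g xs = 0)"

definition HKT :: "nat \<Rightarrow> (nat \<Rightarrow> nat \<Rightarrow> nat \<Rightarrow> real) \<Rightarrow> (nat \<Rightarrow> nat \<Rightarrow> real) \<Rightarrow> (nat \<Rightarrow> nat \<Rightarrow> real)
     \<Rightarrow> (nat \<Rightarrow> nat \<Rightarrow> real) \<Rightarrow> (nat \<Rightarrow> nat \<Rightarrow> real) \<Rightarrow> bool" where
  "HKT n de J1 J2 J3 g \<longleftrightarrow>
     cplx_str n de J1 \<and> cplx_str n de J2 \<and> cplx_str n de J3 \<and>
     (\<forall>x :: nat \<Rightarrow> real. inV n x \<longrightarrow>
        matv n J1 (matv n J2 x) = matv n J3 x \<and>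
        matv n J2 (matv n J1 x) = (\<lambda>i. - matv n J3 x i)) \<and>
     compat_metric n J1 g \<and> compat_metric n J2 g \<and> compat_metric n J3 g \<and>
     (\<forall>xs :: (nat \<Rightarrow> real) list. length xs = 3 \<and> (\<forall>x\<in>set xs. inV n x) \<longrightarrow>
        Jform n J1 (dform n de (omega n g J1)) xs = Jform n J2 (dform n de (omega n g J2)) xs \<and>
        Jform n J2 (dform n de (omega n g J2)) xs = Jform n J3 (dform n de (omega n g J3)) xs)"

text \<open>Torsion 3-form of the Bismut connection of (J1,g): H = J1 d omega_1
 (common to the three complex structures in the HKT case).\<close>
definition bismut_torsion :: "nat \<Rightarrow> (nat \<Rightarrow> nat \<Rightarrow> nat \<Rightarrow> real) \<Rightarrow> (nat \<Rightarrow> nat \<Rightarrow> real) \<Rightarrow> (nat \<Rightarrow> nat \<Rightarrow> real) \<Rightarrow> real form" where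
  "bismut_torsion n de J g = Jform n J (dform n de (omega n g J))"

definition weak_HKT :: "nat \<Rightarrow> (nat \<Rightarrow> nat \<Rightarrow> nat \<Rightarrow> real) \<Rightarrow> (nat \<Rightarrow> nat \<Rightarrow> real) \<Rightarrow> (nat \<Rightarrow> nat \<Rightarrow> real)
     \<Rightarrow> (nat \<Rightarrow> nat \<Rightarrow> real) \<Rightarrow> (nat \<Rightarrow> nat \<Rightarrow> real) \<Rightarrow> bool" where
  "weak_HKT n de J1 J2 J3 g \<longleftrightarrow> HKT n de J1 J2 J3 g \<and>
     (\<exists>xs :: (nat \<Rightarrow> real) list. length xs = 4 \<and> (\<forall>x\<in>set xs. inV n x) \<and>
        dform n de (bismut_torsion n de J1 g) xs \<noteq> 0)"

definition de_h5R3 :: "nat \<Rightarrow> nat \<Rightarrow> nat \<Rightarrow> real" where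
  "de_h5R3 k i j = (if k = 5 then wedge2 1 2 i j + wedge2 3 4 i j else 0)"

definition de_h3CR2 :: "nat \<Rightarrow> nat \<Rightarrow> nat \<Rightarrow> real" where
  "de_h3CR2 k i j = (if k = 5 then wedge2 1 3 i j - wedge2 2 4 i j
                     else if k = 6 then wedge2 1 4 i j + wedge2 2 3 i j else 0)"

definition de_h7QR :: "nat \<Rightarrow> nat \<Rightarrow> nat \<Rightarrow> real" where
  "de_h7QR k i j = (if k = 5 then wedge2 1 2 i j + wedge2 3 4 i j
                    else if k = 6 then wedge2 1 3 i j - wedge2 2 4 i j
                    else if k = 7 then wedge2 1 4 i j + wedge2 2 3 i j else 0)"

end

theory Submission
  imports Defs
begin

(*
  On h5 + R^3 the derived algebra is the central line spanned by e5.  For a complex structure J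
  the Nijenhuis condition forces de^5 to be J-invariant, i.e. of type (1,1), and then for every
  compatible metric del dbar omega = omega(e5, e5^{0,1}) de^5 /\ de^5.  The coefficient has
  imaginary part |J e5|^2 / 2 > 0 and de^5 /\ de^5 = 2 e^1234 is nonzero, so no metric is SKT.

  The hypercomplex structure I, J, K of R^8 = H^2 is abelian ([Jx, Jy] = [x, y]) on all three
  algebras.  For an abelian complex structure J d omega reduces to
  -g([a,b],c) + g([a,c],b) - g([b,c],a), which does not involve J, so the standard inner product
  is HKT; its torsion is not closed, as its differential does not vanish on (e1, e2, e3, e4).
  On h3^C + R^2 and h7^Q + R explicit SKT structures are checked in (1,0)-coframes adapted to J.
*)

section \<open>Coordinate vectors, matrices and bilinear forms\<close>

definition basis_vec :: "nat \<Rightarrow> nat \<Rightarrow> 'a::zero_neq_one" where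
  "basis_vec l = (\<lambda>i. if i = l then 1 else 0)"

definition cpx :: "(nat \<Rightarrow> real) \<Rightarrow> nat \<Rightarrow> complex" where
  "cpx r = (\<lambda>i. complex_of_real (r i))"

lemma inV_matv: "inV n (matv n A x)"
  by (simp add: inV_def matv_def)

lemma inV_lbr: "inV n (lbr n de x y)"
  by (simp add: inV_def lbr_def)

lemma inV_basis_vec: "l \<in> {1..n} \<Longrightarrow> inV n (basis_vec l)"
  by (simp add: inV_def basis_vec_def)

lemma inV_Re: "inV n v \<Longrightarrow> inV n (\<lambda>k. Re (v k))"
  and inV_Im: "inV n v \<Longrightarrow> inV n (\<lambda>k. Im (v k))"
  by (auto simp: inV_def)

lemma matv_scale: "matv n A (\<lambda>i. a * u i) = (\<lambda>i. a * matv n A u i)"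
  by (rule ext) (simp add: matv_def sum_distrib_left algebra_simps)

lemma matv_neg: "matv n A (\<lambda>i. - u i) = (\<lambda>i. - matv n A u i)"
  using matv_scale[of n A "-1" u] by simp

lemma matv_cpx: "matv n A (cpx r) = cpx (matv n A r)"
  by (rule ext) (simp add: matv_def cpx_def)

lemma matv_complexify:
  "matv n A (\<lambda>i. cpx a i + \<i> * cpx b i) = (\<lambda>i. cpx (matv n A a) i + \<i> * cpx (matv n A b) i)"
  by (rule ext) (simp add: matv_def cpx_def sum.distrib sum_distrib_left algebra_simps)

lemma complex_vec_decomp: "v = (\<lambda>i. cpx (\<lambda>k. Re (v k)) i + \<i> * cpx (\<lambda>k. Im (v k)) i)"
  by (rule ext) (simp add: cpx_def complex_eq_iff)

lemma bil_linear_left: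
  "bil n g (\<lambda>i. a * x i + b * y i) z = a * bil n g x z + b * bil n g y z"
  by (simp add: bil_def sum.distrib sum_distrib_left algebra_simps)

lemma bil_linear_right:
  "bil n g z (\<lambda>i. a * x i + b * y i) = a * bil n g z x + b * bil n g z y"
  by (simp add: bil_def sum.distrib sum_distrib_left algebra_simps)

lemma bil_scale_left: "bil n g (\<lambda>i. a * x i) z = a * bil n g x z"
  by (simp add: bil_def sum_distrib_left algebra_simps)

lemma bil_scale_right: "bil n g z (\<lambda>i. a * x i) = a * bil n g z x"
  by (simp add: bil_def sum_distrib_left algebra_simps)

lemma bil_neg_left: "bil n g (\<lambda>i. - x i) z = - bil n g x z"
  using bil_scale_left[of n g "-1" x z] by simp

lemma bil_neg_right: "bil n g z (\<lambda>i. - x i) = - bil n g z x"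
  by (simp add: bil_def sum_negf)

lemma bil_cpx: "bil n g (cpx a) (cpx b) = of_real (bil n g a b)"
  by (simp add: bil_def cpx_def)

lemma bil_basis_vec:
  assumes "i \<in> {1..n}" "j \<in> {1..n}"
  shows "bil n g (basis_vec i) (basis_vec j) = (of_real (g i j) :: 'a::real_field)"
proof -
  have "of_real (g a b) * basis_vec i a * basis_vec j b =
      (if b = j then if a = i then of_real (g i j) else 0 else (0 :: 'a))" for a b
    by (simp add: basis_vec_def)
  then show ?thesis
    using assms by (simp add: bil_def sum.delta)
qed

lemma bil_complexify:
  "bil n g (\<lambda>i. cpx a i + \<i> * cpx b i) (\<lambda>i. cpx c i + \<i> * cpx d i) =
     of_real (bil n g a c) - of_real (bil n g b d) + \<i> * (of_real (bil n g a d) + of_real (bil n g b c))"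
  by (simp add: bil_def cpx_def sum.distrib sum_subtractf sum_distrib_left algebra_simps)

lemma bil_invariant_complex:
  fixes v w :: "nat \<Rightarrow> complex"
  assumes inv: "\<And>x y :: nat \<Rightarrow> real. inV n x \<Longrightarrow> inV n y \<Longrightarrow> bil n g (matv n J x) (matv n J y) = bil n g x y"
    and v: "inV n v" and w: "inV n w"
  shows "bil n g (matv n J v) (matv n J w) = bil n g v w"
proof -
  note re_im = inV_Re[OF v] inV_Im[OF v] inV_Re[OF w] inV_Im[OF w]
  show ?thesis
    by (subst (1 2 3 4) complex_vec_decomp)
       (simp only: matv_complexify bil_complexify inv re_im)
qed

lemma matv_sq_complex:
  fixes v :: "nat \<Rightarrow> complex"
  assumes cs: "cplx_str n de J" and v: "inV n v"
  shows "matv n J (matv n J v) = (\<lambda>i. - v i)"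
proof -
  have "matv n J (matv n J r) = (\<lambda>i. - r i)" if "inV n r" for r :: "nat \<Rightarrow> real"
    using cs that unfolding cplx_str_def by blast
  then have "matv n J (matv n J v) = (\<lambda>i. cpx (\<lambda>k. - Re (v k)) i + \<i> * cpx (\<lambda>k. - Im (v k)) i)"
    by (subst complex_vec_decomp) (simp add: matv_complexify inV_Re[OF v] inV_Im[OF v])
  also have "\<dots> = (\<lambda>i. - v i)"
    by (rule ext) (simp add: cpx_def complex_eq_iff)
  finally show ?thesis .
qed

lemma compat_metric_bil_matv:
  fixes x y :: "nat \<Rightarrow> real"
  shows "compat_metric n J g \<Longrightarrow> inV n x \<Longrightarrow> inV n y \<Longrightarrow> bil n g (matv n J x) (matv n J y) = bil n g x y"
  unfolding compat_metric_def by blast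

lemma weighted_sum_squares_pos:
  fixes x :: "nat \<Rightarrow> real"
  assumes "inV n x" "x \<noteq> (\<lambda>_. 0)" "\<And>i. i \<in> {1..n} \<Longrightarrow> 0 < c i"
  shows "0 < (\<Sum>i=1..n. c i * (x i * x i))"
proof -
  obtain i where i: "x i \<noteq> 0" using assms(2) by auto
  with assms(1) have "i \<in> {1..n}" by (auto simp: inV_def)
  then show ?thesis
    using i assms(3) by (intro sum_pos2[of "{1..n}" i]) (auto simp: less_le)
qed

lemma omega_pair: "omega n g J [u, w] = bil n g (matv n J u) w"
  by (simp add: omega_def)

section \<open>Forms of degree three and four and their types\<close>

lemma dform_3:
  "dform n de \<alpha> [a,b,c] = - \<alpha> [lbr n de a b, c] + \<alpha> [lbr n de a c, b] - \<alpha> [lbr n de b c, a]"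
  unfolding dform_def by (simp add: lessThan_Suc eval_nat_numeral drop2_def upt_rec)

lemma dform_4: "dform n de \<alpha> [a,b,c,d] =
   - \<alpha> [lbr n de a b, c, d] + \<alpha> [lbr n de a c, b, d] - \<alpha> [lbr n de a d, b, c]
   - \<alpha> [lbr n de b c, a, d] + \<alpha> [lbr n de b d, a, c] - \<alpha> [lbr n de c d, a, b]"
  unfolding dform_def by (simp add: lessThan_Suc eval_nat_numeral drop2_def upt_rec algebra_simps)

lemma card_1_subsets_3: "{S. S \<subseteq> {..<3::nat} \<and> card S = 1} = {{0},{1},{2}}"
proof -
  have "S \<subseteq> {..<3::nat} \<and> card S = 1 \<longleftrightarrow> S = {0} \<or> S = {1} \<or> S = {2}" for S
    by (auto simp: card_1_singleton_iff)
  then show ?thesis by auto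
qed

lemma card_2_subsets_4: "{S. S \<subseteq> {..<4::nat} \<and> card S = 2} = {{0,1},{0,2},{0,3},{1,2},{1,3},{2,3}}"
proof (rule set_eqI, rule iffI)
  fix S :: "nat set"
  assume "S \<in> {S. S \<subseteq> {..<4::nat} \<and> card S = 2}"
  then have S: "S \<subseteq> {..<4}" "card S = 2" by (simp_all only: mem_Collect_eq)
  from S(2) obtain x y where "S = {x,y}" "x \<noteq> y" by (auto simp: card_2_iff)
  then obtain a b where ab: "S = {a,b}" "a < b" by (metis insert_commute linorder_neqE_nat)
  with S(1) have "b < 4" by auto
  with ab(2) have "a = 0 \<and> b = 1 \<or> a = 0 \<and> b = 2 \<or> a = 0 \<and> b = 3 \<or> a = 1 \<and> b = 2 \<or> a = 1 \<and> b = 3 \<or> a = 2 \<and> b = 3"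
    by (auto simp: less_Suc_eq numeral_eq_Suc)
  with ab(1) show "S \<in> {{0,1},{0,2},{0,3},{1,2},{1,3},{2,3}}" by (elim disjE conjE) simp_all
next
  fix S :: "nat set"
  assume "S \<in> {{0,1},{0,2},{0,3},{1,2},{1,3},{2,3}}"
  then show "S \<in> {S. S \<subseteq> {..<4::nat} \<and> card S = 2}" by auto
qed

lemma typeproj_1_3: "typeproj n J 1 \<alpha> [a,b,c] =
     \<alpha> [P10 n J a, P01 n J b, P01 n J c] + \<alpha> [P01 n J a, P10 n J b, P01 n J c]
   + \<alpha> [P01 n J a, P01 n J b, P10 n J c]"
proof -
  have "length [a,b,c] = 3" by simp
  then show ?thesis unfolding typeproj_def by (simp only: card_1_subsets_3) (simp add: upt_rec)
qed

lemma typeproj_2_4: "typeproj n J 2 \<alpha> [a,b,c,d] =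
     \<alpha> [P10 n J a, P10 n J b, P01 n J c, P01 n J d] + \<alpha> [P10 n J a, P01 n J b, P10 n J c, P01 n J d]
   + \<alpha> [P10 n J a, P01 n J b, P01 n J c, P10 n J d] + \<alpha> [P01 n J a, P10 n J b, P10 n J c, P01 n J d]
   + \<alpha> [P01 n J a, P10 n J b, P01 n J c, P10 n J d] + \<alpha> [P01 n J a, P01 n J b, P10 n J c, P10 n J d]"
proof -
  have "length [a,b,c,d] = 4" by simp
  then show ?thesis unfolding typeproj_def
    by (simp only: card_2_subsets_4) (simp add: upt_rec doubleton_eq_iff algebra_simps)
qed

lemma P10_eq: "P10 n J v = (\<lambda>i. (1/2) * v i + (- \<i>/2) * matv n J v i)"
  by (rule ext) (simp add: P10_def field_simps)

lemma P01_eq: "P01 n J v = (\<lambda>i. (1/2) * v i + (\<i>/2) * matv n J v i)"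
  by (rule ext) (simp add: P01_def field_simps)

lemma inV_P10: "inV n v \<Longrightarrow> inV n (P10 n J v)"
  and inV_P01: "inV n v \<Longrightarrow> inV n (P01 n J v)"
  by (simp_all add: inV_def P10_def P01_def matv_def)

lemma P10_scale: "P10 n J (\<lambda>i. s * u i) = (\<lambda>i. s * P10 n J u i)"
  and P01_scale: "P01 n J (\<lambda>i. s * u i) = (\<lambda>i. s * P01 n J u i)"
  by (simp_all add: P10_eq P01_eq matv_scale algebra_simps)

lemma Im_omega_basis_vec_P01_pos:
  assumes cs: "cplx_str n de J" and cm: "compat_metric n J g" and l: "l \<in> {1..n}"
  shows "0 < Im (omega n g J [basis_vec l, P01 n J (basis_vec l)])"
proof -
  define e :: "nat \<Rightarrow> real" where "e = basis_vec l"
  define u where "u = matv n J e"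
  have e: "basis_vec l = cpx e"
    by (rule ext) (simp add: basis_vec_def cpx_def e_def)
  have "Im (omega n g J [basis_vec l, P01 n J (basis_vec l)]) = bil n g u u / 2"
    unfolding omega_pair e P01_eq matv_cpx bil_linear_right bil_cpx by (simp add: u_def)
  moreover have "u \<noteq> (\<lambda>_. 0)"
  proof
    assume "u = (\<lambda>_. 0)"
    then have "matv n J u l = 0" by (simp add: matv_def)
    moreover have "matv n J u = (\<lambda>i. - e i)"
      using cs inV_basis_vec[OF l] unfolding cplx_str_def u_def e_def by blast
    ultimately show False by (simp add: e_def basis_vec_def)
  qed
  then have "0 < bil n g u u"
    using cm inV_matv unfolding compat_metric_def u_def by blast
  ultimately show ?thesis by simp
qed

lemma SKT_intro:
  assumes "cplx_str n de J" and "compat_metric n J g"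
    and "\<And>x0 x1 x2 x3. ddbar_omega n de J g [x0, x1, x2, x3] = 0"
  shows "SKT n de J g"
proof -
  have "ddbar_omega n de J g xs = 0" if "length xs = 4" for xs
  proof -
    from that obtain x0 x1 x2 x3 where "xs = [x0, x1, x2, x3]"
      by (auto simp: eval_nat_numeral length_Suc_conv)
    with assms(3) show ?thesis by simp
  qed
  with assms(1,2) show ?thesis unfolding SKT_def by blast
qed

section \<open>Abelian complex structures and HKT metrics\<close>

definition bracket_invariant :: "nat \<Rightarrow> (nat \<Rightarrow> nat \<Rightarrow> nat \<Rightarrow> real) \<Rightarrow> (nat \<Rightarrow> nat \<Rightarrow> real) \<Rightarrow> bool" where
  "bracket_invariant n de J \<longleftrightarrow>
     (\<forall>x y :: nat \<Rightarrow> real. inV n x \<longrightarrow> inV n y \<longrightarrow> lbr n de (matv n J x) (matv n J y) = lbr n de x y)"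

lemma lbr_neg_right: "lbr n de x (\<lambda>i. - y i) = (\<lambda>k. - lbr n de x y k)"
  by (rule ext) (simp add: lbr_def sum_negf)

lemma cplx_str_of_bracket_invariant:
  assumes sq: "\<And>x :: nat \<Rightarrow> real. inV n x \<Longrightarrow> matv n J (matv n J x) = (\<lambda>i. - x i)"
    and inv: "bracket_invariant n de J"
  shows "cplx_str n de J"
  unfolding cplx_str_def
proof (intro conjI allI impI)
  fix x y :: "nat \<Rightarrow> real"
  assume "inV n x \<and> inV n y"
  then have x: "inV n x" and y: "inV n y" by auto
  have "lbr n de x (matv n J y) = lbr n de (matv n J x) (matv n J (matv n J y))"
    using inv x inV_matv unfolding bracket_invariant_def by metis
  also have "\<dots> = (\<lambda>k. - lbr n de (matv n J x) y k)"
    by (simp add: sq[OF y] lbr_neg_right)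
  finally have "matv n J (lbr n de x (matv n J y)) = (\<lambda>k. - matv n J (lbr n de (matv n J x) y) k)"
    by (simp add: matv_neg)
  moreover have "lbr n de (matv n J x) (matv n J y) = lbr n de x y"
    using inv x y unfolding bracket_invariant_def by blast
  ultimately show "lbr n de (matv n J x) (matv n J y) - matv n J (lbr n de (matv n J x) y)
      - matv n J (lbr n de x (matv n J y)) - lbr n de x y = (\<lambda>_. 0)"
    by (simp add: fun_diff_def)
qed (use sq in blast)

definition bracket_torsion :: "nat \<Rightarrow> (nat \<Rightarrow> nat \<Rightarrow> nat \<Rightarrow> real) \<Rightarrow> (nat \<Rightarrow> nat \<Rightarrow> real) \<Rightarrow> real form" where
  "bracket_torsion n de g xs =
     - bil n g (lbr n de (xs ! 0) (xs ! 1)) (xs ! 2) + bil n g (lbr n de (xs ! 0) (xs ! 2)) (xs ! 1)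
     - bil n g (lbr n de (xs ! 1) (xs ! 2)) (xs ! 0)"

lemma Jform_domega_bracket_invariant:
  assumes inv: "bracket_invariant n de J" and cm: "compat_metric n J g"
    and a: "inV n a" and b: "inV n b" and c: "inV n c"
  shows "Jform n J (dform n de (omega n g J)) [a, b, c] = bracket_torsion n de g [a, b, c]"
proof -
  have br: "lbr n de (matv n J u) (matv n J v) = lbr n de u v" if "inV n u" "inV n v" for u v :: "nat \<Rightarrow> real"
    using inv that unfolding bracket_invariant_def by blast
  have om: "omega n g J [lbr n de u v, matv n J w] = bil n g (lbr n de u v) w" if "inV n w" for u v w :: "nat \<Rightarrow> real"
    unfolding omega_def using compat_metric_bil_matv[OF cm inV_lbr that] by simp
  show ?thesis
    unfolding Jform_def list.map dform_3 bracket_torsion_def by (simp add: br om a b c)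
qed

lemma dform_bismut_torsion_bracket_invariant:
  assumes "bracket_invariant n de J" "compat_metric n J g"
    and "inV n a" "inV n b" "inV n c" "inV n d"
  shows "dform n de (bismut_torsion n de J g) [a, b, c, d] = dform n de (bracket_torsion n de g) [a, b, c, d]"
  unfolding dform_4 bismut_torsion_def
  by (simp add: Jform_domega_bracket_invariant assms inV_lbr)

lemma weak_HKT_of_bracket_invariant:
  assumes sq: "\<And>x :: nat \<Rightarrow> real. inV n x \<Longrightarrow> matv n J1 (matv n J1 x) = (\<lambda>i. - x i)"
      "\<And>x :: nat \<Rightarrow> real. inV n x \<Longrightarrow> matv n J2 (matv n J2 x) = (\<lambda>i. - x i)"
      "\<And>x :: nat \<Rightarrow> real. inV n x \<Longrightarrow> matv n J3 (matv n J3 x) = (\<lambda>i. - x i)"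
    and quat: "\<And>x :: nat \<Rightarrow> real. matv n J1 (matv n J2 x) = matv n J3 x"
      "\<And>x :: nat \<Rightarrow> real. matv n J2 (matv n J1 x) = (\<lambda>i. - matv n J3 x i)"
    and inv: "bracket_invariant n de J1" "bracket_invariant n de J2" "bracket_invariant n de J3"
    and cm: "compat_metric n J1 g" "compat_metric n J2 g" "compat_metric n J3 g"
    and wit: "inV n a" "inV n b" "inV n c" "inV n d"
      "dform n de (bracket_torsion n de g) [a, b, c, d] \<noteq> 0"
  shows "weak_HKT n de J1 J2 J3 g"
proof -
  have hk: "Jform n J1 (dform n de (omega n g J1)) xs = Jform n J2 (dform n de (omega n g J2)) xs \<and>
      Jform n J2 (dform n de (omega n g J2)) xs = Jform n J3 (dform n de (omega n g J3)) xs"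
    if "length xs = 3 \<and> (\<forall>x\<in>set xs. inV n x)" for xs :: "(nat \<Rightarrow> real) list"
  proof -
    from that obtain x y z where xs: "xs = [x, y, z]"
      by (auto simp: numeral_3_eq_3 length_Suc_conv)
    with that have "inV n x" "inV n y" "inV n z" by auto
    then show ?thesis
      unfolding xs by (simp add: Jform_domega_bracket_invariant inv cm)
  qed
  have "dform n de (bismut_torsion n de J1 g) [a, b, c, d] \<noteq> 0"
    using wit by (simp add: dform_bismut_torsion_bracket_invariant inv cm)
  then show ?thesis
    unfolding weak_HKT_def HKT_def
    using cplx_str_of_bracket_invariant[OF sq(1) inv(1)] cplx_str_of_bracket_invariant[OF sq(2) inv(2)]
      cplx_str_of_bracket_invariant[OF sq(3) inv(3)] quat cm hk wit(1-4)
    by (intro conjI exI[of _ "[a, b, c, d]"]) auto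
qed

section \<open>Lie algebras whose derived algebra is a central line\<close>

(* Typically h_{2k+1} + R^l, with e_m spanning the centre of the Heisenberg factor. *)
locale central_derived_line =
  fixes n :: nat and de :: "nat \<Rightarrow> nat \<Rightarrow> nat \<Rightarrow> real" and m :: nat
  assumes m_in: "m \<in> {1..n}"
    and de_other: "\<And>k i j. k \<noteq> m \<Longrightarrow> de k i j = 0"
    and de_central: "\<And>j. de m m j = 0"
    and de_antisym: "\<And>i j. de m i j = - de m j i"
begin

lemma lbr_eq: "lbr n de x y = (\<lambda>k. (- bil n (de m) x y) * basis_vec m k)"
proof
  fix k
  show "lbr n de x y k = (- bil n (de m) x y) * basis_vec m k"
    using m_in by (cases "k = m") (simp_all add: lbr_def bil_def basis_vec_def de_other)
qed

lemma bil_de_basis_vec: "bil n (de m) (basis_vec m) w = 0"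
  unfolding bil_def basis_vec_def by (intro sum.neutral ballI) (simp add: de_central)

lemma bil_de_antisym: "bil n (de m) u w = - bil n (de m) w u"
proof -
  have "of_real (de m i j) * u i * w j = - (of_real (de m j i) * w j * u i)" for i j
    using de_antisym[of i j] by (simp add: algebra_simps)
  then show ?thesis
    unfolding bil_def by (subst sum.swap) (simp add: sum_negf)
qed

lemma bil_de_invariant_real:
  fixes x y :: "nat \<Rightarrow> real"
  assumes cs: "cplx_str n de J" and x: "inV n x" and y: "inV n y"
  shows "bil n (de m) (matv n J x) (matv n J y) = bil n (de m) x y"
proof -
  let ?F = "bil n (de m)" and ?e = "basis_vec m :: nat \<Rightarrow> real"
  define c where "c = ?F x y - ?F (matv n J x) (matv n J y)"
  define w where "w = ?F (matv n J x) y + ?F x (matv n J y)"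
  have "lbr n de (matv n J x) (matv n J y) - matv n J (lbr n de (matv n J x) y)
      - matv n J (lbr n de x (matv n J y)) - lbr n de x y = (\<lambda>_. 0)"
    using cs x y unfolding cplx_str_def by blast
  then have Nij: "(\<lambda>k. c * ?e k + w * matv n J ?e k) = (\<lambda>_. 0)"
    unfolding lbr_eq matv_scale c_def w_def by (simp add: fun_diff_def algebra_simps)
  \<comment> \<open>J e_m is not a multiple of e_m since J^2 = -1, so w = 0.\<close>
  have "w = 0"
  proof (rule ccontr)
    assume "w \<noteq> 0"
    with Nij have Je: "matv n J ?e = (\<lambda>k. (- c / w) * ?e k)"
      by (simp add: fun_eq_iff field_simps add_eq_0_iff)
    have "matv n J (matv n J ?e) = (\<lambda>i. - ?e i)"
      using cs inV_basis_vec[OF m_in] unfolding cplx_str_def by blast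
    then have "(- c / w) * ((- c / w) * ?e m) = - ?e m"
      unfolding Je matv_scale by (metis (no_types, lifting))
    then have "(c / w)\<^sup>2 = -1"
      by (simp add: basis_vec_def power2_eq_square)
    then show False
      by (metis neg_0_le_iff_le not_one_le_zero zero_le_power2)
  qed
  with fun_cong[OF Nij, of m] have "c = 0"
    by (simp add: basis_vec_def)
  then show ?thesis
    by (simp add: c_def)
qed

lemma bil_de_invariant:
  fixes v w :: "nat \<Rightarrow> complex"
  assumes cs: "cplx_str n de J" and "inV n v" "inV n w"
  shows "bil n (de m) (matv n J v) (matv n J w) = bil n (de m) v w"
  using bil_invariant_complex bil_de_invariant_real[OF cs] assms(2,3) by blast

lemma bil_de_matv_left:
  fixes v w :: "nat \<Rightarrow> complex"
  assumes cs: "cplx_str n de J" and v: "inV n v" and w: "inV n w"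
  shows "bil n (de m) (matv n J v) w = - bil n (de m) v (matv n J w)"
proof -
  have "bil n (de m) (matv n J v) w = bil n (de m) (matv n J (matv n J v)) (matv n J w)"
    using bil_de_invariant[OF cs inV_matv w] by simp
  also have "\<dots> = - bil n (de m) v (matv n J w)"
    by (simp add: matv_sq_complex[OF cs v] bil_neg_left)
  finally show ?thesis .
qed

lemma omega_lbr:
  "omega n g J [lbr n de x y, w] = - bil n (de m) x y * omega n g J [basis_vec m, w]"
  unfolding omega_pair lbr_eq matv_scale bil_scale_left ..

lemma dform_omega: "dform n de (omega n g J) [a, b, c] =
    bil n (de m) a b * omega n g J [basis_vec m, c] - bil n (de m) a c * omega n g J [basis_vec m, b]
  + bil n (de m) b c * omega n g J [basis_vec m, a]"
  by (simp add: dform_3 omega_lbr)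

context
  fixes J :: "nat \<Rightarrow> nat \<Rightarrow> real"
  assumes cs: "cplx_str n de J"
begin

lemma bil_de_P10_P10: "inV n c \<Longrightarrow> inV n d \<Longrightarrow> bil n (de m) (P10 n J c) (P10 n J d) = 0"
  and bil_de_P01_P01: "inV n c \<Longrightarrow> inV n d \<Longrightarrow> bil n (de m) (P01 n J c) (P01 n J d) = 0"
  and bil_de_split: "inV n c \<Longrightarrow> inV n d \<Longrightarrow>
     bil n (de m) c d = bil n (de m) (P10 n J c) (P01 n J d) + bil n (de m) (P01 n J c) (P10 n J d)"
  unfolding P10_eq P01_eq bil_linear_left bil_linear_right
  by (simp_all add: bil_de_invariant[OF cs] bil_de_matv_left[OF cs] matv_sq_complex[OF cs]
      bil_neg_right inV_matv algebra_simps)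

lemma bil_de_P10_basis_vec: "inV n w \<Longrightarrow> bil n (de m) (P10 n J (basis_vec m)) w = 0"
  and bil_de_P01_basis_vec: "inV n w \<Longrightarrow> bil n (de m) (P01 n J (basis_vec m)) w = 0"
  unfolding P10_eq P01_eq bil_linear_left
  by (simp_all add: bil_de_matv_left[OF cs inV_basis_vec[OF m_in]] bil_de_basis_vec)

lemma dbar_omega_lbr:
  assumes c: "inV n c" and d: "inV n d"
  shows "dbar_omega n de J g [lbr n de y y', c, d] =
    - bil n (de m) y y' * omega n g J [basis_vec m, P01 n J (basis_vec m)] * bil n (de m) c d"
  unfolding dbar_omega_def typeproj_1_3 dform_omega lbr_eq P10_scale P01_scale bil_scale_left
    omega_pair bil_scale_right
  by (simp add: bil_de_P10_basis_vec bil_de_P01_basis_vec bil_de_P01_P01[OF c d]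
      bil_de_split[OF c d] inV_P10 inV_P01 c d algebra_simps)

lemma ddbar_omega_eq:
  assumes x: "inV n x0" "inV n x1" "inV n x2" "inV n x3"
  shows "ddbar_omega n de J g [x0, x1, x2, x3] = 2 * omega n g J [basis_vec m, P01 n J (basis_vec m)] *
    (bil n (de m) x0 x1 * bil n (de m) x2 x3 - bil n (de m) x0 x2 * bil n (de m) x1 x3
     + bil n (de m) x0 x3 * bil n (de m) x1 x2)"
proof -
  note inV_PQ = inV_P10[OF x(1)] inV_P10[OF x(2)] inV_P10[OF x(3)] inV_P10[OF x(4)]
    inV_P01[OF x(1)] inV_P01[OF x(2)] inV_P01[OF x(3)] inV_P01[OF x(4)]
  note split = bil_de_split[OF x(1) x(2)] bil_de_split[OF x(1) x(3)] bil_de_split[OF x(1) x(4)]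
    bil_de_split[OF x(2) x(3)] bil_de_split[OF x(2) x(4)] bil_de_split[OF x(3) x(4)]
  show ?thesis
    unfolding ddbar_omega_def typeproj_2_4 dform_4
    by (simp add: dbar_omega_lbr inV_PQ bil_de_P10_P10 bil_de_P01_P01 x split
        bil_de_antisym[of "P01 n J u" "P10 n J v" for u v] algebra_simps)
qed

end

(* The left-hand side is (de^m /\ de^m)(x0, x1, x2, x3) / 2. *)
theorem SKT_imp_de_wedge_de_zero:
  fixes x0 x1 x2 x3 :: "nat \<Rightarrow> complex"
  assumes "SKT n de J g" and "inV n x0" "inV n x1" "inV n x2" "inV n x3"
  shows "bil n (de m) x0 x1 * bil n (de m) x2 x3 - bil n (de m) x0 x2 * bil n (de m) x1 x3
     + bil n (de m) x0 x3 * bil n (de m) x1 x2 = 0"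
proof -
  have cs: "cplx_str n de J" and cm: "compat_metric n J g"
    and "ddbar_omega n de J g [x0, x1, x2, x3] = 0"
    using assms unfolding SKT_def by auto
  moreover have "omega n g J [basis_vec m, P01 n J (basis_vec m)] \<noteq> 0"
    using Im_omega_basis_vec_P01_pos[OF cs cm m_in] by force
  ultimately show ?thesis
    using ddbar_omega_eq[OF cs assms(2-5)] by simp
qed

end

section \<open>The three eight-dimensional Lie algebras\<close>

(* Stated with Suc 0, the simp normal form of 1 as a lower bound. *)
lemma sum_1_8: "(\<Sum>j = Suc 0..8. f j) = f 1 + f 2 + f 3 + f 4 + f 5 + f 6 + f 7 + (f 8 :: 'a::comm_monoid_add)"
proof -
  have "{Suc 0..8} = {1,2,3,4,5,6,7,8::nat}" by auto
  then show ?thesis by (simp add: add.assoc)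
qed

definition e12_plus_e34 :: "(nat \<Rightarrow> 'a::real_field) \<Rightarrow> (nat \<Rightarrow> 'a) \<Rightarrow> 'a" where
  "e12_plus_e34 x y = x 1 * y 2 - x 2 * y 1 + x 3 * y 4 - x 4 * y 3"

definition e13_minus_e24 :: "(nat \<Rightarrow> 'a::real_field) \<Rightarrow> (nat \<Rightarrow> 'a) \<Rightarrow> 'a" where
  "e13_minus_e24 x y = x 1 * y 3 - x 3 * y 1 - x 2 * y 4 + x 4 * y 2"

definition e14_plus_e23 :: "(nat \<Rightarrow> 'a::real_field) \<Rightarrow> (nat \<Rightarrow> 'a) \<Rightarrow> 'a" where
  "e14_plus_e23 x y = x 1 * y 4 - x 4 * y 1 + x 2 * y 3 - x 3 * y 2"

lemma lbr_h5R3: "lbr 8 de_h5R3 x y = (\<lambda>k. if k = 5 then - e12_plus_e34 x y else 0)"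
  by (rule ext) (simp add: lbr_def sum_1_8 de_h5R3_def wedge2_def e12_plus_e34_def algebra_simps)

lemma lbr_h3CR2: "lbr 8 de_h3CR2 x y =
    (\<lambda>k. if k = 5 then - e13_minus_e24 x y else if k = 6 then - e14_plus_e23 x y else 0)"
  by (rule ext) (simp add: lbr_def sum_1_8 de_h3CR2_def wedge2_def e13_minus_e24_def e14_plus_e23_def algebra_simps)

lemma lbr_h7QR: "lbr 8 de_h7QR x y = (\<lambda>k. if k = 5 then - e12_plus_e34 x y
    else if k = 6 then - e13_minus_e24 x y else if k = 7 then - e14_plus_e23 x y else 0)"
  by (rule ext) (simp add: lbr_def sum_1_8 de_h7QR_def wedge2_def e12_plus_e34_def e13_minus_e24_def
      e14_plus_e23_def algebra_simps)

interpretation h5R3: central_derived_line 8 de_h5R3 5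
  by unfold_locales (auto simp: de_h5R3_def wedge2_def)

theorem h5R3_no_SKT: "\<not> (\<exists>J g. SKT 8 de_h5R3 J g)"
proof
  assume "\<exists>J g. SKT 8 de_h5R3 J g"
  then obtain J g where "SKT 8 de_h5R3 J g" by blast
  from h5R3.SKT_imp_de_wedge_de_zero[OF this, of "basis_vec 1" "basis_vec 2" "basis_vec 3" "basis_vec 4"]
  show False
    by (simp add: inV_basis_vec bil_basis_vec de_h5R3_def wedge2_def)
qed

(* Right multiplication by i and j on H^2 = R^8 (basis 1, i, j, k of each factor); K = I J. *)
definition hyp_I :: "nat \<Rightarrow> nat \<Rightarrow> real" where
  "hyp_I i j = (if i = 2 \<and> j = 1 then 1 else if i = 1 \<and> j = 2 then -1
     else if i = 4 \<and> j = 3 then -1 else if i = 3 \<and> j = 4 then 1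
     else if i = 6 \<and> j = 5 then 1 else if i = 5 \<and> j = 6 then -1
     else if i = 8 \<and> j = 7 then -1 else if i = 7 \<and> j = 8 then 1 else 0)"

definition hyp_J :: "nat \<Rightarrow> nat \<Rightarrow> real" where
  "hyp_J i j = (if i = 3 \<and> j = 1 then 1 else if i = 1 \<and> j = 3 then -1
     else if i = 4 \<and> j = 2 then 1 else if i = 2 \<and> j = 4 then -1
     else if i = 7 \<and> j = 5 then 1 else if i = 5 \<and> j = 7 then -1
     else if i = 8 \<and> j = 6 then 1 else if i = 6 \<and> j = 8 then -1 else 0)"

definition hyp_K :: "nat \<Rightarrow> nat \<Rightarrow> real" where
  "hyp_K i j = (if i = 1 \<and> j = 4 then 1 else if i = 2 \<and> j = 3 then -1
     else if i = 3 \<and> j = 2 then 1 else if i = 4 \<and> j = 1 then -1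
     else if i = 5 \<and> j = 8 then 1 else if i = 6 \<and> j = 7 then -1
     else if i = 7 \<and> j = 6 then 1 else if i = 8 \<and> j = 5 then -1 else 0)"

definition g_std :: "nat \<Rightarrow> nat \<Rightarrow> real" where
  "g_std i j = (if i = j then 1 else 0)"

lemma matv_hyp_I: "matv 8 hyp_I x = (\<lambda>i. if i = 1 then - x 2 else if i = 2 then x 1
    else if i = 3 then x 4 else if i = 4 then - x 3 else if i = 5 then - x 6 else if i = 6 then x 5
    else if i = 7 then x 8 else if i = 8 then - x 7 else 0)"
  by (rule ext) (simp add: matv_def sum_1_8 hyp_I_def)

lemma matv_hyp_J: "matv 8 hyp_J x = (\<lambda>i. if i = 1 then - x 3 else if i = 2 then - x 4
    else if i = 3 then x 1 else if i = 4 then x 2 else if i = 5 then - x 7 else if i = 6 then - x 8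
    else if i = 7 then x 5 else if i = 8 then x 6 else 0)"
  by (rule ext) (simp add: matv_def sum_1_8 hyp_J_def)

lemma matv_hyp_K: "matv 8 hyp_K x = (\<lambda>i. if i = 1 then x 4 else if i = 2 then - x 3
    else if i = 3 then x 2 else if i = 4 then - x 1 else if i = 5 then x 8 else if i = 6 then - x 7
    else if i = 7 then x 6 else if i = 8 then - x 5 else 0)"
  by (rule ext) (simp add: matv_def sum_1_8 hyp_K_def)

lemma bil_g_std: "bil 8 g_std x y = (\<Sum>i=1..8. x i * y i)"
  by (simp add: bil_def g_std_def sum_1_8)

lemma compat_metric_g_std:
  assumes "\<And>x y :: nat \<Rightarrow> real. bil 8 g_std (matv 8 J x) (matv 8 J y) = bil 8 g_std x y"
  shows "compat_metric 8 J g_std"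
  unfolding compat_metric_def
  using assms weighted_sum_squares_pos[of 8 _ "\<lambda>_. 1"] by (auto simp: g_std_def bil_g_std)

lemma hyp_sq:
  fixes x :: "nat \<Rightarrow> real"
  assumes "inV 8 x"
  shows "matv 8 hyp_I (matv 8 hyp_I x) = (\<lambda>i. - x i)"
    and "matv 8 hyp_J (matv 8 hyp_J x) = (\<lambda>i. - x i)"
    and "matv 8 hyp_K (matv 8 hyp_K x) = (\<lambda>i. - x i)"
  using assms by (auto simp: matv_hyp_I matv_hyp_J matv_hyp_K inV_def)

lemma hyp_quaternion:
  "matv 8 hyp_I (matv 8 hyp_J x) = matv 8 hyp_K x"
  "matv 8 hyp_J (matv 8 hyp_I x) = (\<lambda>i. - matv 8 hyp_K x i)"
  by (simp_all add: fun_eq_iff matv_hyp_I matv_hyp_J matv_hyp_K)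

lemma compat_metric_hyp:
  "compat_metric 8 hyp_I g_std" "compat_metric 8 hyp_J g_std" "compat_metric 8 hyp_K g_std"
  by (auto intro!: compat_metric_g_std simp: bil_g_std sum_1_8 matv_hyp_I matv_hyp_J matv_hyp_K algebra_simps)

lemma weak_HKT_hyp:
  assumes "bracket_invariant 8 de hyp_I" "bracket_invariant 8 de hyp_J" "bracket_invariant 8 de hyp_K"
    and "dform 8 de (bracket_torsion 8 de g_std) [basis_vec 1, basis_vec 2, basis_vec 3, basis_vec 4] \<noteq> 0"
  shows "weak_HKT 8 de hyp_I hyp_J hyp_K g_std"
  by (rule weak_HKT_of_bracket_invariant[OF hyp_sq hyp_quaternion assms(1-3) compat_metric_hyp
        inV_basis_vec inV_basis_vec inV_basis_vec inV_basis_vec assms(4)]) simp_all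

lemma h5R3_bracket_invariant:
  "bracket_invariant 8 de_h5R3 hyp_I" "bracket_invariant 8 de_h5R3 hyp_J" "bracket_invariant 8 de_h5R3 hyp_K"
  unfolding bracket_invariant_def lbr_h5R3 e12_plus_e34_def
  by (simp_all add: fun_eq_iff matv_hyp_I matv_hyp_J matv_hyp_K algebra_simps)

lemma h3CR2_bracket_invariant:
  "bracket_invariant 8 de_h3CR2 hyp_I" "bracket_invariant 8 de_h3CR2 hyp_J" "bracket_invariant 8 de_h3CR2 hyp_K"
  unfolding bracket_invariant_def lbr_h3CR2 e13_minus_e24_def e14_plus_e23_def
  by (simp_all add: fun_eq_iff matv_hyp_I matv_hyp_J matv_hyp_K algebra_simps)

lemma h7QR_bracket_invariant:
  "bracket_invariant 8 de_h7QR hyp_I" "bracket_invariant 8 de_h7QR hyp_J" "bracket_invariant 8 de_h7QR hyp_K"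
  unfolding bracket_invariant_def lbr_h7QR e12_plus_e34_def e13_minus_e24_def e14_plus_e23_def
  by (simp_all add: fun_eq_iff matv_hyp_I matv_hyp_J matv_hyp_K algebra_simps)

lemma h5R3_weak_HKT: "weak_HKT 8 de_h5R3 hyp_I hyp_J hyp_K g_std"
  by (rule weak_HKT_hyp[OF h5R3_bracket_invariant])
     (simp add: dform_4 bracket_torsion_def lbr_h5R3 e12_plus_e34_def bil_g_std sum_1_8 basis_vec_def)

lemma h3CR2_weak_HKT: "weak_HKT 8 de_h3CR2 hyp_I hyp_J hyp_K g_std"
  by (rule weak_HKT_hyp[OF h3CR2_bracket_invariant])
     (simp add: dform_4 bracket_torsion_def lbr_h3CR2 e13_minus_e24_def e14_plus_e23_def bil_g_std sum_1_8
        basis_vec_def)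

lemma h7QR_weak_HKT: "weak_HKT 8 de_h7QR hyp_I hyp_J hyp_K g_std"
  by (rule weak_HKT_hyp[OF h7QR_bracket_invariant])
     (simp add: dform_4 bracket_torsion_def lbr_h7QR e12_plus_e34_def e13_minus_e24_def e14_plus_e23_def
        bil_g_std sum_1_8 basis_vec_def)

definition J_h7QR :: "nat \<Rightarrow> nat \<Rightarrow> real" where
  "J_h7QR i j = (if i = 2 \<and> j = 1 then 1 else if i = 1 \<and> j = 2 then -1
     else if i = 4 \<and> j = 3 then 1 else if i = 3 \<and> j = 4 then -1
     else if i = 7 \<and> j = 6 then 1 else if i = 6 \<and> j = 7 then -1
     else if i = 8 \<and> j = 5 then 1 else if i = 5 \<and> j = 8 then -1 else 0)"

definition g_h7QR :: "nat \<Rightarrow> nat \<Rightarrow> real" where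
  "g_h7QR i j = (if i = j then (if i = 5 \<or> i = 8 then 2 else 1) else 0)"

lemma matv_J_h7QR: "matv 8 J_h7QR x = (\<lambda>i. if i = 1 then - x 2 else if i = 2 then x 1
    else if i = 3 then - x 4 else if i = 4 then x 3 else if i = 5 then - x 8 else if i = 6 then - x 7
    else if i = 7 then x 6 else if i = 8 then x 5 else 0)"
  by (rule ext) (simp add: matv_def sum_1_8 J_h7QR_def)

lemma bil_g_h7QR: "bil 8 g_h7QR x y = (\<Sum>i=1..8. (if i = 5 \<or> i = 8 then 2 else 1) * (x i * y i))"
  by (simp add: bil_def g_h7QR_def sum_1_8)

lemma omega_h7QR: "omega 8 g_h7QR J_h7QR [u, w] =
    - u 2 * w 1 + u 1 * w 2 - u 4 * w 3 + u 3 * w 4 - 2 * (u 8 * w 5) - u 7 * w 6 + u 6 * w 7 + 2 * (u 5 * w 8)"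
  by (simp add: omega_pair bil_g_h7QR sum_1_8 matv_J_h7QR)

definition zeta1 :: "(nat \<Rightarrow> complex) \<Rightarrow> complex" where "zeta1 u = u 1 + \<i> * u 2"

definition zeta2 :: "(nat \<Rightarrow> complex) \<Rightarrow> complex" where "zeta2 u = u 3 + \<i> * u 4"

definition zetabar1 :: "(nat \<Rightarrow> complex) \<Rightarrow> complex" where "zetabar1 u = u 1 - \<i> * u 2"

definition zetabar2 :: "(nat \<Rightarrow> complex) \<Rightarrow> complex" where "zetabar2 u = u 3 - \<i> * u 4"

definition zeta12 :: "(nat \<Rightarrow> complex) \<Rightarrow> (nat \<Rightarrow> complex) \<Rightarrow> complex" where
  "zeta12 u v = zeta1 u * zeta2 v - zeta2 u * zeta1 v"

definition zetabar12 :: "(nat \<Rightarrow> complex) \<Rightarrow> (nat \<Rightarrow> complex) \<Rightarrow> complex" where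
  "zetabar12 u v = zetabar1 u * zetabar2 v - zetabar2 u * zetabar1 v"

lemma zeta_P10:
  "zeta1 (P10 8 J_h7QR u) = zeta1 u" "zeta2 (P10 8 J_h7QR u) = zeta2 u"
  "zetabar1 (P10 8 J_h7QR u) = 0" "zetabar2 (P10 8 J_h7QR u) = 0"
  by (simp_all add: zeta1_def zeta2_def zetabar1_def zetabar2_def P10_def matv_J_h7QR field_simps)

lemma zeta_P01:
  "zeta1 (P01 8 J_h7QR u) = 0" "zeta2 (P01 8 J_h7QR u) = 0"
  "zetabar1 (P01 8 J_h7QR u) = zetabar1 u" "zetabar2 (P01 8 J_h7QR u) = zetabar2 u"
  by (simp_all add: zeta1_def zeta2_def zetabar1_def zetabar2_def P01_def matv_J_h7QR field_simps)

lemma e12_plus_e34_zeta: "e12_plus_e34 u v =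
    (\<i>/2) * (zeta1 u * zetabar1 v - zetabar1 u * zeta1 v + zeta2 u * zetabar2 v - zetabar2 u * zeta2 v)"
  by (simp add: e12_plus_e34_def zeta1_def zeta2_def zetabar1_def zetabar2_def field_simps)

lemma dbar_omega_h7QR_lbr: "dbar_omega 8 de_h7QR J_h7QR g_h7QR [lbr 8 de_h7QR y y', c, d] =
    (\<i>/2) * zeta12 y y' * zetabar12 c d - \<i> * e12_plus_e34 y y' * e12_plus_e34 c d"
  unfolding dbar_omega_def typeproj_1_3 dform_3
  by (simp add: omega_h7QR lbr_h7QR P10_def P01_def matv_J_h7QR e12_plus_e34_def e13_minus_e24_def
      e14_plus_e23_def zeta12_def zetabar12_def zeta1_def zeta2_def zetabar1_def zetabar2_def field_simps)

lemma ddbar_omega_h7QR: "ddbar_omega 8 de_h7QR J_h7QR g_h7QR [x0, x1, x2, x3] = 0"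
  unfolding ddbar_omega_def typeproj_2_4 dform_4 dbar_omega_h7QR_lbr zeta12_def zetabar12_def
    e12_plus_e34_zeta zeta_P10 zeta_P01
  by (simp add: field_simps)

lemma cplx_str_J_h7QR: "cplx_str 8 de_h7QR J_h7QR"
  unfolding cplx_str_def lbr_h7QR e12_plus_e34_def e13_minus_e24_def e14_plus_e23_def
  by (auto simp: fun_eq_iff matv_J_h7QR inV_def algebra_simps)

lemma compat_metric_g_h7QR: "compat_metric 8 J_h7QR g_h7QR"
  unfolding compat_metric_def
  using weighted_sum_squares_pos[of 8 _ "\<lambda>i. if i = 5 \<or> i = 8 then 2 else 1"]
  by (auto simp: g_h7QR_def bil_g_h7QR sum_1_8 matv_J_h7QR algebra_simps)

lemma h7QR_SKT: "SKT 8 de_h7QR J_h7QR g_h7QR"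
  by (rule SKT_intro[OF cplx_str_J_h7QR compat_metric_g_h7QR ddbar_omega_h7QR])

definition J_h3CR2 :: "nat \<Rightarrow> nat \<Rightarrow> real" where
  "J_h3CR2 i j = (if i = 1 then (if j = 3 then -1 else 0)
     else if i = 2 then (if j = 1 then 3/2 else if j = 2 then 1 else if j = 3 then -1/2 else if j = 4 then 2 else 0)
     else if i = 3 then (if j = 1 then 1 else 0)
     else if i = 4 then (if j = 1 then -1/2 else if j = 2 then -1 else if j = 3 then 1 else if j = 4 then -1 else 0)
     else if i = 5 then (if j = 6 then -1/2 else 0)
     else if i = 6 then (if j = 5 then 2 else 0)
     else if i = 7 then (if j = 8 then -1 else 0)
     else if i = 8 then (if j = 7 then 1 else 0) else 0)"

definition g_h3CR2 :: "nat \<Rightarrow> nat \<Rightarrow> real" where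
  "g_h3CR2 i j = (if i = 1 then (if j = 1 then 9/2 else if j = 2 then 2 else if j = 3 then -5/4 else if j = 4 then 7/2 else 0)
     else if i = 2 then (if j = 1 then 2 else if j = 2 then 3 else if j = 3 then -3/2 else if j = 4 then 3 else 0)
     else if i = 3 then (if j = 1 then -5/4 else if j = 2 then -3/2 else if j = 3 then 13/4 else if j = 4 then -2 else 0)
     else if i = 4 then (if j = 1 then 7/2 else if j = 2 then 3 else if j = 3 then -2 else if j = 4 then 6 else 0)
     else if i = 5 then (if j = 5 then 4 else 0)
     else if i = j \<and> 6 \<le> i \<and> i \<le> 8 then 1 else 0)"

lemma matv_J_h3CR2: "matv 8 J_h3CR2 x = (\<lambda>i. if i = 1 then - x 3
    else if i = 2 then 3/2 * x 1 + x 2 - 1/2 * x 3 + 2 * x 4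
    else if i = 3 then x 1
    else if i = 4 then - 1/2 * x 1 - x 2 + x 3 - x 4
    else if i = 5 then - 1/2 * x 6 else if i = 6 then 2 * x 5 else if i = 7 then - x 8
    else if i = 8 then x 7 else 0)"
  by (rule ext) (simp add: matv_def sum_1_8 J_h3CR2_def)

lemma bil_g_h3CR2: "bil 8 g_h3CR2 x y =
     9/2 * (x 1 * y 1) + 2 * (x 1 * y 2) - 5/4 * (x 1 * y 3) + 7/2 * (x 1 * y 4)
   + 2 * (x 2 * y 1) + 3 * (x 2 * y 2) - 3/2 * (x 2 * y 3) + 3 * (x 2 * y 4)
   - 5/4 * (x 3 * y 1) - 3/2 * (x 3 * y 2) + 13/4 * (x 3 * y 3) - 2 * (x 3 * y 4)
   + 7/2 * (x 4 * y 1) + 3 * (x 4 * y 2) - 2 * (x 4 * y 3) + 6 * (x 4 * y 4)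
   + 4 * (x 5 * y 5) + x 6 * y 6 + x 7 * y 7 + x 8 * y 8"
  by (simp add: bil_def g_h3CR2_def sum_1_8 algebra_simps)

lemma bil_g_h3CR2_sq: "bil 8 g_h3CR2 x (x :: nat \<Rightarrow> real) = (\<Sum>i=1..8. (if i = 5 then 4 else 1) * (x i * x i))
    + ((x 3)\<^sup>2 + (3/2 * x 1 + x 2 - 1/2 * x 3 + 2 * x 4)\<^sup>2 + (x 1)\<^sup>2 + (- 1/2 * x 1 - x 2 + x 3 - x 4)\<^sup>2)"
  by (simp add: bil_g_h3CR2 sum_1_8 power2_eq_square field_simps)

lemma cplx_str_J_h3CR2: "cplx_str 8 de_h3CR2 J_h3CR2"
  unfolding cplx_str_def lbr_h3CR2 e13_minus_e24_def e14_plus_e23_def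
  by (auto simp: fun_eq_iff matv_J_h3CR2 inV_def field_simps)

lemma compat_metric_g_h3CR2: "compat_metric 8 J_h3CR2 g_h3CR2"
  unfolding compat_metric_def
proof (intro conjI allI impI ballI)
  fix x :: "nat \<Rightarrow> real"
  assume "inV 8 x \<and> x \<noteq> (\<lambda>_. 0)"
  then have "0 < (\<Sum>i=1..8. (if i = 5 then 4 else 1) * (x i * x i))"
    by (intro weighted_sum_squares_pos) auto
  then show "0 < bil 8 g_h3CR2 x x"
    unfolding bil_g_h3CR2_sq by (simp add: add_pos_nonneg)
qed (simp_all add: g_h3CR2_def bil_g_h3CR2 matv_J_h3CR2 field_simps)

lemma omega_h3CR2_lbr: "omega 8 g_h3CR2 J_h3CR2 [lbr 8 de_h3CR2 x y, w] =
    2 * e14_plus_e23 x y * w 5 - 2 * e13_minus_e24 x y * w 6"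
  by (simp add: omega_pair bil_g_h3CR2 matv_J_h3CR2 lbr_h3CR2)

definition xi1 :: "(nat \<Rightarrow> complex) \<Rightarrow> complex" where "xi1 u = - \<i> * u 1 + u 3"

definition xi2 :: "(nat \<Rightarrow> complex) \<Rightarrow> complex" where "xi2 u = (3 - \<i>) * u 1 + (2 + 2 * \<i>) * u 2 + 4 * u 4"

definition xibar1 :: "(nat \<Rightarrow> complex) \<Rightarrow> complex" where "xibar1 u = \<i> * u 1 + u 3"

definition xibar2 :: "(nat \<Rightarrow> complex) \<Rightarrow> complex" where "xibar2 u = (3 + \<i>) * u 1 + (2 - 2 * \<i>) * u 2 + 4 * u 4"

lemma xi_P10: "xi1 (P10 8 J_h3CR2 u) = xi1 u" "xi2 (P10 8 J_h3CR2 u) = xi2 u"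
    "xibar1 (P10 8 J_h3CR2 u) = 0" "xibar2 (P10 8 J_h3CR2 u) = 0"
  by (simp_all add: xi1_def xi2_def xibar1_def xibar2_def P10_def matv_J_h3CR2 field_simps)

lemma xi_P01: "xi1 (P01 8 J_h3CR2 u) = 0" "xi2 (P01 8 J_h3CR2 u) = 0"
    "xibar1 (P01 8 J_h3CR2 u) = xibar1 u" "xibar2 (P01 8 J_h3CR2 u) = xibar2 u"
  by (simp_all add: xi1_def xi2_def xibar1_def xibar2_def P01_def matv_J_h3CR2 field_simps)

definition sigma :: "(nat \<Rightarrow> complex) \<Rightarrow> (nat \<Rightarrow> complex) \<Rightarrow> complex" where
  "sigma u v = e13_minus_e24 u v + (\<i>/2) * e14_plus_e23 u v"

definition sigmabar :: "(nat \<Rightarrow> complex) \<Rightarrow> (nat \<Rightarrow> complex) \<Rightarrow> complex" where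
  "sigmabar u v = e13_minus_e24 u v - (\<i>/2) * e14_plus_e23 u v"

lemma sigma_xi: "sigma u v = (-3/16 - \<i>/16) * (xi1 u * xi2 v - xi2 u * xi1 v)
    + (-1/8 + \<i>/2) * (xi1 u * xibar1 v - xibar1 u * xi1 v) + 1/8 * (xi1 u * xibar2 v - xibar2 u * xi1 v)
    + (-1/16 - \<i>/16) * (xi2 u * xibar1 v - xibar1 u * xi2 v) + (\<i>/16) * (xi2 u * xibar2 v - xibar2 u * xi2 v)"
  by (simp add: sigma_def e13_minus_e24_def e14_plus_e23_def xi1_def xi2_def xibar1_def xibar2_def field_simps)

lemma sigmabar_xi: "sigmabar u v = (-3/16 + \<i>/16) * (xibar1 u * xibar2 v - xibar2 u * xibar1 v)
    + (1/8 + \<i>/2) * (xi1 u * xibar1 v - xibar1 u * xi1 v) + (1/16 - \<i>/16) * (xi1 u * xibar2 v - xibar2 u * xi1 v)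
    - 1/8 * (xi2 u * xibar1 v - xibar1 u * xi2 v) + (\<i>/16) * (xi2 u * xibar2 v - xibar2 u * xi2 v)"
  by (simp add: sigmabar_def e13_minus_e24_def e14_plus_e23_def xi1_def xi2_def xibar1_def xibar2_def field_simps)

lemma omega_h3CR2_lbr_central:
  "omega 8 g_h3CR2 J_h3CR2 [lbr 8 de_h3CR2 (P10 8 J_h3CR2 (lbr 8 de_h3CR2 y y')) w, w'] = 0"
  "omega 8 g_h3CR2 J_h3CR2 [lbr 8 de_h3CR2 (P01 8 J_h3CR2 (lbr 8 de_h3CR2 y y')) w, w'] = 0"
  unfolding omega_h3CR2_lbr e13_minus_e24_def e14_plus_e23_def
  by (simp_all add: P10_def P01_def matv_J_h3CR2 lbr_h3CR2)

lemma omega_h3CR2_P10_lbr: "omega 8 g_h3CR2 J_h3CR2 [lbr 8 de_h3CR2 u v, P10 8 J_h3CR2 (lbr 8 de_h3CR2 y y')] =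
    - 2 * \<i> * sigma y y' * sigmabar u v"
  unfolding omega_h3CR2_lbr by (simp add: P10_def matv_J_h3CR2 lbr_h3CR2 sigma_def sigmabar_def field_simps)

lemma omega_h3CR2_P01_lbr: "omega 8 g_h3CR2 J_h3CR2 [lbr 8 de_h3CR2 u v, P01 8 J_h3CR2 (lbr 8 de_h3CR2 y y')] =
    2 * \<i> * sigmabar y y' * sigma u v"
  unfolding omega_h3CR2_lbr by (simp add: P01_def matv_J_h3CR2 lbr_h3CR2 sigma_def sigmabar_def field_simps)

lemma dbar_omega_h3CR2_lbr: "dbar_omega 8 de_h3CR2 J_h3CR2 g_h3CR2 [lbr 8 de_h3CR2 y y', c, d] =
    2 * \<i> * (sigma y y' * sigmabar (P01 8 J_h3CR2 c) (P01 8 J_h3CR2 d)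
      - sigmabar y y' * (sigma (P10 8 J_h3CR2 c) (P01 8 J_h3CR2 d) + sigma (P01 8 J_h3CR2 c) (P10 8 J_h3CR2 d)))"
  unfolding dbar_omega_def typeproj_1_3 dform_3
  by (simp add: omega_h3CR2_lbr_central omega_h3CR2_P10_lbr omega_h3CR2_P01_lbr algebra_simps)

lemma ddbar_omega_h3CR2: "ddbar_omega 8 de_h3CR2 J_h3CR2 g_h3CR2 [x0, x1, x2, x3] = 0"
  unfolding ddbar_omega_def typeproj_2_4 dform_4 dbar_omega_h3CR2_lbr sigma_xi sigmabar_xi xi_P10 xi_P01
  by (simp add: field_simps)

lemma h3CR2_SKT: "SKT 8 de_h3CR2 J_h3CR2 g_h3CR2"
  by (rule SKT_intro[OF cplx_str_J_h3CR2 compat_metric_g_h3CR2 ddbar_omega_h3CR2])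

theorem corollary4p3:
  shows "(\<exists>J1 J2 J3 g. weak_HKT 8 de_h5R3 J1 J2 J3 g) \<and> \<not> (\<exists>J g. SKT 8 de_h5R3 J g) \<and>
         (\<exists>J g. SKT 8 de_h3CR2 J g) \<and> (\<exists>J1 J2 J3 g. weak_HKT 8 de_h3CR2 J1 J2 J3 g) \<and>
         (\<exists>J g. SKT 8 de_h7QR J g) \<and> (\<exists>J1 J2 J3 g. weak_HKT 8 de_h7QR J1 J2 J3 g)"
  using h5R3_weak_HKT h5R3_no_SKT h3CR2_SKT h3CR2_weak_HKT h7QR_SKT h7QR_weak_HKT by blast

end
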